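(* Let $q,m$ be positive integers with $q\ge 2$. Let $\mathbf{A}^{q,m}=[a_{j,k}]$ be the $q^m\times q(m+1)$ array with rows indexed by $j\in[0,q^m)$ and columns by $k\in[0,q(m+1))$, defined as follows. Write $j=(j_{m-1},\dots,j_0)_q$ and $k=uq+v$ with $0\le u\le m$, $0\le v<q$. If $0\le u<m$: $$a_{j,k}=\begin{cases} *, & j_u=v,\\ (j_u-v-1,\ j_{m-1},\dots,j_{u+1},\ v,\ j_{u-1},\dots,j_0)_q, & j_u\ne v.\end{cases}$$ If $u=m$: $$a_{j,k}=\begin{cases} *, & j_0+\cdots+j_{m-1}=v,\\ (v-\textstyle\sum_{l=0}^{m-1}j_l-1,\ j_{m-1},\dots,j_0)_q, & j_0+\cdots+j_{m-1}\ne v,\end{cases}$$ where all additions and subtractions of digits (including in the conditions) are performed modulo $q$ (with results in $[0,q)$). Then $\mathbf{A}^{q,m}$ is an $(m+1)$-regular $(q(m+1),\,q^m,\,q^{m-1},\,q^{m+1}-q^m)$ PDA, and its rate $S/F$ equals $q-1$.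
   Context: Notation: $[i,j)=\{i,\dots,j-1\}$. For an integer $s$ with $s=\sum_{l=0}^{n-1}s_lq^l$, $s_l\in[0,q)$, we write $s=(s_{n-1},\dots,s_0)_q$ (the $q$-ary representation; the leftmost digit is most significant). For positive integers $K,F,Z,S$ and an integer $g$, an $F\times K$ array $\mathbf{P}=[p_{j,k}]$ whose entries are either a special symbol $*$ or one of the integers $0,1,\dots,S-1$ is a $g$-regular $(K,F,Z,S)$ PDA if: (C1) the symbol $*$ appears exactly $Z$ times in each column; (C2') each integer in $[0,S)$ appears exactly $g$ times in $\mathbf{P}$; (C3) for any two distinct entries with $p_{j_1,k_1}=p_{j_2,k_2}=s$ an integer, we have $j_1\neq j_2$, $k_1\neq k_2$, and $p_{j_1,k_2}=p_{j_2,k_1}=*$. The rate of such a PDA (i.e. of its associated caching scheme) is $R=S/F$. *)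

theory Defs
  imports Complex_Main
begin

text \<open>An F x K array with entries in {*} \<union> nat is modelled as a function
  P :: nat \<Rightarrow> nat \<Rightarrow> nat option, rows j < F, columns k < K;
  None represents the symbol *, Some s the integer s.\<close>

definition is_regular_PDA ::
  "nat \<Rightarrow> nat \<Rightarrow> nat \<Rightarrow> nat \<Rightarrow> nat \<Rightarrow> (nat \<Rightarrow> nat \<Rightarrow> nat option) \<Rightarrow> bool" where
  "is_regular_PDA g K F Z S P \<longleftrightarrow>
     0 < K \<and> 0 < F \<and> 0 < Z \<and> 0 < S \<and>
     (\<forall>j<F. \<forall>k<K. \<forall>s. P j k = Some s \<longrightarrow> s < S) \<and>
     (\<forall>k<K. card {j. j < F \<and> P j k = None} = Z) \<and>
     (\<forall>s<S. card {(j, k). j < F \<and> k < K \<and> P j k = Some s} = g) \<and>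
     (\<forall>j1<F. \<forall>k1<K. \<forall>j2<F. \<forall>k2<K. \<forall>s.
        P j1 k1 = Some s \<and> P j2 k2 = Some s \<and> (j1, k1) \<noteq> (j2, k2) \<longrightarrow>
        j1 \<noteq> j2 \<and> k1 \<noteq> k2 \<and> P j1 k2 = None \<and> P j2 k1 = None)"

definition PDA_rate :: "nat \<Rightarrow> nat \<Rightarrow> real" where
  "PDA_rate F S = real S / real F"

definition digit :: "nat \<Rightarrow> nat \<Rightarrow> nat \<Rightarrow> nat" where
  "digit q j l = j div q ^ l mod q"

definition modq :: "nat \<Rightarrow> int \<Rightarrow> nat" where
  "modq q x = nat (x mod int q)"

definition arrA :: "nat \<Rightarrow> nat \<Rightarrow> nat \<Rightarrow> nat \<Rightarrow> nat option" where
  "arrA q m j k =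
     (let u = k div q; v = k mod q in
      if u < m then
        (if digit q j u = v then None
         else Some (modq q (int (digit q j u) - int v - 1) * q ^ m
                    + (\<Sum>l<m. (if l = u then v else digit q j l) * q ^ l)))
      else
        (if modq q (\<Sum>l<m. int (digit q j l)) = v then None
         else Some (modq q (int v - (\<Sum>l<m. int (digit q j l)) - 1) * q ^ m
                    + (\<Sum>l<m. digit q j l * q ^ l))))"

end

theory Submission
  imports Defs "HOL-Library.FuncSet" "HOL-Number_Theory.Cong"
begin

text \<open>
  Write a value \<open>s < q^(m+1) - q^m\<close> as \<open>s = t q^m + x\<close> with \<open>t + 1 < q\<close> and \<open>x < q^m\<close>.
  Reading the definition of the array backwards, \<open>s\<close> occurs exactly once in each group \<open>u \<le> m\<close>
  of \<open>q\<close> columns: for \<open>u < m\<close> in column \<open>u q + x\<^sub>u\<close> of the row obtained from \<open>x\<close> by raising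
  digit \<open>u\<close> by \<open>t + 1\<close> modulo \<open>q\<close>, and for \<open>u = m\<close> in column \<open>m q + (\<Sum>x\<^sub>l + t + 1) mod q\<close>
  of row \<open>x\<close>. As \<open>0 < t + 1 < q\<close>, for \<open>u < m\<close> that row differs from \<open>x\<close> exactly in digit \<open>u\<close>
  and has digit sum \<open>\<Sum>x\<^sub>l + t + 1\<close> modulo \<open>q\<close>; hence the row of each occurrence meets the
  column of every other occurrence in a star. In a column of group \<open>u < m\<close> the stars are the rows with a prescribed
  digit \<open>u\<close>, in the last group the rows with a prescribed digit sum modulo \<open>q\<close>; either way one
  digit is determined by the others, which leaves \<open>q^(m-1)\<close> rows.
\<close>

section \<open>Base-\<open>q\<close> digits\<close>

definition from_digits :: "nat \<Rightarrow> nat \<Rightarrow> (nat \<Rightarrow> nat) \<Rightarrow> nat" where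
  "from_digits q m d = (\<Sum>l<m. d l * q ^ l)"

lemma from_digits_Suc: "from_digits q (Suc m) d = d 0 + q * from_digits q m (\<lambda>l. d (Suc l))"
  unfolding from_digits_def by (subst sum.lessThan_Suc_shift) (simp add: sum_distrib_left mult_ac)

lemma from_digits_cong: "(\<And>l. l < m \<Longrightarrow> d l = e l) \<Longrightarrow> from_digits q m d = from_digits q m e"
  unfolding from_digits_def by (rule sum.cong) auto

lemma digit_0: "digit q j 0 = j mod q"
  unfolding digit_def by simp

lemma digit_Suc: "digit q j (Suc l) = digit q (j div q) l"
  unfolding digit_def by (simp add: div_mult2_eq)

lemma digit_less: "0 < q \<Longrightarrow> digit q j l < q"
  unfolding digit_def by simp

lemma from_digits_less: "(\<And>l. l < m \<Longrightarrow> d l < q) \<Longrightarrow> from_digits q m d < q ^ m"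
proof (induction m arbitrary: d)
  case 0
  then show ?case by (simp add: from_digits_def)
next
  case (Suc m)
  then have "from_digits q m (\<lambda>l. d (Suc l)) + 1 \<le> q ^ m" and "d 0 < q"
    by (simp_all add: Suc_leI)
  then have "d 0 + q * from_digits q m (\<lambda>l. d (Suc l)) < q * (from_digits q m (\<lambda>l. d (Suc l)) + 1)"
    by simp
  also have "\<dots> \<le> q * q ^ m"
    using \<open>from_digits q m (\<lambda>l. d (Suc l)) + 1 \<le> q ^ m\<close> by (rule mult_le_mono2)
  finally show ?case by (simp add: from_digits_Suc)
qed

lemma digit_from_digits:
  "(\<And>l. l < m \<Longrightarrow> d l < q) \<Longrightarrow> l < m \<Longrightarrow> digit q (from_digits q m d) l = d l"
proof (induction m arbitrary: d l)
  case 0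
  then show ?case by simp
next
  case (Suc m)
  then have "d 0 < q" by simp
  show ?case
  proof (cases l)
    case 0
    then show ?thesis using \<open>d 0 < q\<close> by (simp add: from_digits_Suc digit_0)
  next
    case (Suc l')
    have "(d 0 + q * from_digits q m (\<lambda>l. d (Suc l))) div q = from_digits q m (\<lambda>l. d (Suc l))"
      using \<open>d 0 < q\<close> by simp
    then show ?thesis
      using Suc.IH[of "\<lambda>l. d (Suc l)" l'] Suc.prems \<open>l = Suc l'\<close> by (simp add: from_digits_Suc digit_Suc)
  qed
qed

lemma from_digits_digit: "0 < q \<Longrightarrow> from_digits q m (digit q j) = j mod q ^ m"
proof (induction m arbitrary: j)
  case 0
  then show ?case by (simp add: from_digits_def)
next
  case (Suc m)
  then show ?case by (simp add: from_digits_Suc digit_0 digit_Suc mod_mult2_eq)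
qed

lemma digit_mod_power: "0 < q \<Longrightarrow> l < m \<Longrightarrow> digit q (j mod q ^ m) l = digit q j l"
  using digit_from_digits[of m "digit q j" q l] by (simp add: digit_less from_digits_digit)

lemma eq_if_digits_eq:
  "0 < q \<Longrightarrow> i < q ^ m \<Longrightarrow> j < q ^ m \<Longrightarrow> (\<And>l. l < m \<Longrightarrow> digit q i l = digit q j l) \<Longrightarrow> i = j"
  using from_digits_cong[of m "digit q i" "digit q j" q] by (simp add: from_digits_digit)

definition set_digit :: "nat \<Rightarrow> nat \<Rightarrow> nat \<Rightarrow> nat \<Rightarrow> nat \<Rightarrow> nat" where
  "set_digit q m j u v = from_digits q m (\<lambda>l. if l = u then v else digit q j l)"

lemma set_digit_less: "0 < q \<Longrightarrow> v < q \<Longrightarrow> set_digit q m j u v < q ^ m"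
  unfolding set_digit_def by (rule from_digits_less) (simp add: digit_less)

lemma digit_set_digit:
  "0 < q \<Longrightarrow> v < q \<Longrightarrow> l < m \<Longrightarrow> digit q (set_digit q m j u v) l = (if l = u then v else digit q j l)"
  unfolding set_digit_def by (rule digit_from_digits) (simp_all add: digit_less)

lemma set_digit_cong:
  "(\<And>l. l < m \<Longrightarrow> l \<noteq> u \<Longrightarrow> digit q i l = digit q j l) \<Longrightarrow> set_digit q m i u v = set_digit q m j u v"
  unfolding set_digit_def by (rule from_digits_cong) simp

lemma set_digit_digit:
  assumes "0 < q"
  shows "set_digit q m j u (digit q j u) = j mod q ^ m"
proof -
  have "set_digit q m j u (digit q j u) = from_digits q m (digit q j)"
    unfolding set_digit_def by (rule from_digits_cong) simp
  then show ?thesis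
    using assms by (simp add: from_digits_digit)
qed

definition digit_sum :: "nat \<Rightarrow> nat \<Rightarrow> nat \<Rightarrow> nat" where
  "digit_sum q m j = (\<Sum>l<m. digit q j l)"

lemma digit_sum_mod_power: "0 < q \<Longrightarrow> digit_sum q m (j mod q ^ m) = digit_sum q m j"
  unfolding digit_sum_def by (rule sum.cong) (simp_all add: digit_mod_power)

lemma digit_sum_set_digit:
  assumes "0 < q" and "u < m" and "v < q"
  shows "digit_sum q m (set_digit q m j u v) + digit q j u = digit_sum q m j + v"
proof -
  have "digit_sum q m (set_digit q m j u v) = (\<Sum>l<m. if l = u then v else digit q j l)"
    unfolding digit_sum_def using assms by (intro sum.cong) (simp_all add: digit_set_digit)
  also have "\<dots> = v + (\<Sum>l\<in>{..<m} - {u}. digit q j l)"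
    using \<open>u < m\<close> by (simp add: sum.remove)
  finally show ?thesis
    using \<open>u < m\<close> by (simp add: digit_sum_def sum.remove)
qed

section \<open>Residues modulo \<open>q\<close>\<close>

lemma modq_nat: "modq q (int n) = n mod q"
  unfolding modq_def by (simp flip: of_nat_mod)

lemma modq_less: "0 < q \<Longrightarrow> modq q x < q"
  unfolding modq_def by (simp add: nat_less_iff)

lemma mod_add_modq_diff: "v < q \<Longrightarrow> (a + modq q (int v - int a)) mod q = v"
proof -
  assume "v < q"
  then have "int ((a + modq q (int v - int a)) mod q) = (int a + (int v - int a) mod int q) mod int q"
    by (simp add: modq_def of_nat_mod)
  also have "\<dots> = int v"
    using \<open>v < q\<close> by (simp add: mod_add_right_eq)
  finally show ?thesis by simp
qed

lemma modq_diff_add_mod: "b < q \<Longrightarrow> modq q (int ((a + b) mod q) - int a) = b"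
proof -
  assume "b < q"
  have "(int ((a + b) mod q) - int a) mod int q = ((int a + int b) mod int q - int a) mod int q"
    by (simp add: of_nat_mod)
  also have "\<dots> = int b"
    using \<open>b < q\<close> by (simp add: mod_diff_left_eq)
  finally show ?thesis by (simp add: modq_def)
qed

lemma mod_add_eq_iff_modq:
  assumes "b < q" and "v < q"
  shows "(a + b) mod q = v \<longleftrightarrow> b = modq q (int v - int a)"
proof
  show "(a + b) mod q = v \<Longrightarrow> b = modq q (int v - int a)"
    using modq_diff_add_mod[OF \<open>b < q\<close>, of a] by simp
  show "b = modq q (int v - int a) \<Longrightarrow> (a + b) mod q = v"
    using mod_add_modq_diff[OF \<open>v < q\<close>, of a] by simp
qed

lemma add_mod_neq: "0 < b \<Longrightarrow> b < q \<Longrightarrow> (a + b) mod q \<noteq> a mod (q::nat)"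
proof
  assume "0 < b" "b < q" "(a + b) mod q = a mod q"
  then have "q dvd b"
    using mod_eq_dvd_iff_nat[of a "a + b" q] by simp
  with \<open>0 < b\<close> \<open>b < q\<close> show False
    by (simp add: nat_dvd_not_less)
qed

lemma modq_diff_Suc_less: "v < q \<Longrightarrow> v \<noteq> a mod q \<Longrightarrow> modq q (int v - int a - 1) + 1 < q"
proof (rule ccontr)
  assume "v < q" "v \<noteq> a mod q" "\<not> modq q (int v - int a - 1) + 1 < q"
  then have "modq q (int v - int (a + 1)) = q - 1"
    using modq_less[of q "int v - int (a + 1)"] by (simp add: algebra_simps)
  then have "(a + q) mod q = v"
    using mod_add_modq_diff[OF \<open>v < q\<close>, of "a + 1"] \<open>v < q\<close> by simp
  with \<open>v \<noteq> a mod q\<close> show False by simp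
qed

section \<open>Counting digit vectors\<close>

definition digits :: "nat \<Rightarrow> nat \<Rightarrow> nat \<Rightarrow> nat \<Rightarrow> nat" where
  "digits q m j = restrict (digit q j) {..<m}"

lemma bij_betw_digits:
  assumes "0 < q"
  shows "bij_betw (digits q m) {..<q ^ m} ({..<m} \<rightarrow>\<^sub>E {..<q})"
proof (rule bij_betw_imageI)
  show "inj_on (digits q m) {..<q ^ m}"
  proof (rule inj_onI)
    fix i j assume "i \<in> {..<q ^ m}" "j \<in> {..<q ^ m}" and eq: "digits q m i = digits q m j"
    have "digit q i l = digit q j l" if "l < m" for l
      using fun_cong[OF eq, of l] that by (simp add: digits_def)
    with \<open>0 < q\<close> \<open>i \<in> {..<q ^ m}\<close> \<open>j \<in> {..<q ^ m}\<close> show "i = j"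
      by (simp add: eq_if_digits_eq)
  qed
  show "digits q m ` {..<q ^ m} = {..<m} \<rightarrow>\<^sub>E {..<q}"
  proof
    show "digits q m ` {..<q ^ m} \<subseteq> {..<m} \<rightarrow>\<^sub>E {..<q}"
      using \<open>0 < q\<close> unfolding digits_def by (intro image_subsetI) (simp add: digit_less)
    show "{..<m} \<rightarrow>\<^sub>E {..<q} \<subseteq> digits q m ` {..<q ^ m}"
    proof
      fix d assume d: "d \<in> {..<m} \<rightarrow>\<^sub>E {..<q}"
      then have "digits q m (from_digits q m d) = d"
        by (auto simp: digits_def digit_from_digits PiE_iff extensional_def)
      moreover have "from_digits q m d < q ^ m"
        using d by (auto intro: from_digits_less)
      ultimately show "d \<in> digits q m ` {..<q ^ m}" by force
    qed
  qed
qed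

lemma card_image_fun_upd_PiE:
  assumes "finite I" and "i \<notin> I"
  shows "card ((\<lambda>d. d(i := c d)) ` (Pi\<^sub>E I A)) = (\<Prod>l\<in>I. card (A l))"
proof -
  have "inj_on (\<lambda>d. d(i := c d)) (Pi\<^sub>E I A)"
  proof (rule inj_onI)
    fix d e assume d: "d \<in> Pi\<^sub>E I A" and e: "e \<in> Pi\<^sub>E I A" and eq: "d(i := c d) = e(i := c e)"
    show "d = e"
    proof
      fix l
      show "d l = e l"
        using fun_cong[OF eq, of l] PiE_arb[OF d, of l] PiE_arb[OF e, of l] \<open>i \<notin> I\<close>
        by (cases "l \<in> I") (auto split: if_splits)
    qed
  qed
  then show ?thesis
    using assms by (simp add: card_image card_PiE)
qed

lemma card_PiE_determined_coordinate:
  assumes "finite I" and "i \<in> I" and c: "\<And>d. d \<in> (I - {i}) \<rightarrow>\<^sub>E A \<Longrightarrow> c d \<in> A"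
  shows "card {d \<in> I \<rightarrow>\<^sub>E A. d i = c (restrict d (I - {i}))} = card A ^ (card I - 1)"
proof -
  have "{d \<in> I \<rightarrow>\<^sub>E A. d i = c (restrict d (I - {i}))} = (\<lambda>d. d(i := c d)) ` ((I - {i}) \<rightarrow>\<^sub>E A)"
  proof (intro equalityI subsetI)
    fix d assume d: "d \<in> {d \<in> I \<rightarrow>\<^sub>E A. d i = c (restrict d (I - {i}))}"
    have "d = (restrict d (I - {i}))(i := c (restrict d (I - {i})))"
    proof
      fix x
      show "d x = ((restrict d (I - {i}))(i := c (restrict d (I - {i})))) x"
        using d PiE_arb[of d I "\<lambda>_. A" x] by (cases "x = i") auto
    qed
    moreover have "restrict d (I - {i}) \<in> (I - {i}) \<rightarrow>\<^sub>E A"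
      using d by (simp add: PiE_iff)
    ultimately show "d \<in> (\<lambda>d. d(i := c d)) ` ((I - {i}) \<rightarrow>\<^sub>E A)"
      by blast
  next
    fix d assume "d \<in> (\<lambda>d. d(i := c d)) ` ((I - {i}) \<rightarrow>\<^sub>E A)"
    then obtain e where e: "e \<in> (I - {i}) \<rightarrow>\<^sub>E A" and d: "d = e(i := c e)"
      by blast
    have "d \<in> insert i (I - {i}) \<rightarrow>\<^sub>E A"
      unfolding d using c e by (intro PiE_fun_upd) auto
    moreover have "restrict d (I - {i}) = e"
    proof -
      have "restrict d (I - {i}) = restrict e (I - {i})"
        unfolding d by (rule restrict_ext) simp
      then show ?thesis
        using e by simp
    qed
    ultimately show "d \<in> {d \<in> I \<rightarrow>\<^sub>E A. d i = c (restrict d (I - {i}))}"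
      using \<open>i \<in> I\<close> d by (simp add: insert_absorb)
  qed
  then show ?thesis
    using assms by (simp add: card_image_fun_upd_PiE card_Diff_singleton)
qed

lemma card_digit_eq:
  assumes "u < m" and "v < q"
  shows "card {j. j < q ^ m \<and> digit q j u = v} = q ^ (m - 1)"
proof -
  have "bij_betw (digits q m) {j \<in> {..<q ^ m}. digit q j u = v}
          {d \<in> {..<m} \<rightarrow>\<^sub>E {..<q}. d u = (\<lambda>_. v) (restrict d ({..<m} - {u}))}"
    using assms by (intro bij_betw_Collect bij_betw_digits) (auto simp: digits_def)
  then show ?thesis
    using card_PiE_determined_coordinate[where I = "{..<m}" and i = u and A = "{..<q}" and c = "\<lambda>_. v"] assms
    by (simp add: bij_betw_same_card)
qed

lemma card_digit_sum_mod_eq: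
  assumes "0 < m" and "v < q"
  shows "card {j. j < q ^ m \<and> digit_sum q m j mod q = v} = q ^ (m - 1)"
proof -
  obtain n where m: "m = Suc n"
    using \<open>0 < m\<close> gr0_conv_Suc by blast
  define c where "c d = modq q (int v - int (\<Sum>l<n. d l))" for d :: "nat \<Rightarrow> nat"
  have "digit_sum q m j mod q = v \<longleftrightarrow> digits q m j n = c (restrict (digits q m j) ({..<m} - {n}))" for j
  proof -
    have "digit_sum q m j = (\<Sum>l<n. digit q j l) + digit q j n"
      by (simp add: digit_sum_def m)
    moreover have "(\<Sum>l<n. restrict (digits q m j) ({..<m} - {n}) l) = (\<Sum>l<n. digit q j l)"
      unfolding m digits_def by (rule sum.cong) auto
    then have "c (restrict (digits q m j) ({..<m} - {n})) = modq q (int v - int (\<Sum>l<n. digit q j l))"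
      unfolding c_def by (rule arg_cong)
    ultimately show ?thesis
      using mod_add_eq_iff_modq[of "digit q j n" q v] assms by (simp add: digit_less digits_def m)
  qed
  then have "bij_betw (digits q m) {j \<in> {..<q ^ m}. digit_sum q m j mod q = v}
      {d \<in> {..<m} \<rightarrow>\<^sub>E {..<q}. d n = c (restrict d ({..<m} - {n}))}"
    by (intro bij_betw_Collect bij_betw_digits) (use assms in simp_all)
  then show ?thesis
    using card_PiE_determined_coordinate[where I = "{..<m}" and i = n and A = "{..<q}" and c = c] assms
    by (simp add: bij_betw_same_card c_def modq_less m)
qed

section \<open>Columns and values of the array\<close>

lemma arrA_column:
  assumes "v < q" and "j < q ^ m"
  shows "arrA q m j (u * q + v) =
    (if u < m then
       if digit q j u = v then None
       else Some (modq q (int (digit q j u) - int v - 1) * q ^ m + set_digit q m j u v)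
     else
       if digit_sum q m j mod q = v then None
       else Some (modq q (int v - int (digit_sum q m j) - 1) * q ^ m + j))"
proof -
  have "(u * q + v) div q = u" and "(u * q + v) mod q = v"
    using assms(1) by auto
  moreover have "(\<Sum>l<m. digit q j l * q ^ l) = j"
    using from_digits_digit[of q m j] assms by (simp add: from_digits_def)
  ultimately show ?thesis
    by (simp add: arrA_def set_digit_def from_digits_def digit_sum_def modq_nat flip: of_nat_sum)
qed

lemma div_le_if_less_mult: "k < q * (m + 1) \<Longrightarrow> k div q \<le> (m::nat)"
proof -
  assume "k < q * (m + 1)"
  then have "k < (m + 1) * q"
    by (simp only: mult.commute)
  then have "k div q < m + 1"
    by (rule less_mult_imp_div_less)
  then show ?thesis
    by simp
qed

lemma card_arrA_column_stars:
  assumes "0 < m" and "k < q * (m + 1)"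
  shows "card {j. j < q ^ m \<and> arrA q m j k = None} = q ^ (m - 1)"
proof -
  define u v where "u = k div q" and "v = k mod q"
  have "0 < q"
    using assms(2) by (cases q) auto
  then have "v < q" and k: "k = u * q + v"
    by (simp_all add: u_def v_def)
  show ?thesis
  proof (cases "u < m")
    case True
    then have "{j. j < q ^ m \<and> arrA q m j k = None} = {j. j < q ^ m \<and> digit q j u = v}"
      using arrA_column[OF \<open>v < q\<close>, of _ m u] k by (auto split: if_splits)
    then show ?thesis
      using card_digit_eq[OF True \<open>v < q\<close>] by simp
  next
    case False
    then have "{j. j < q ^ m \<and> arrA q m j k = None} = {j. j < q ^ m \<and> digit_sum q m j mod q = v}"
      using arrA_column[OF \<open>v < q\<close>, of _ m u] k by (auto split: if_splits)
    then show ?thesis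
      using card_digit_sum_mod_eq[OF \<open>0 < m\<close> \<open>v < q\<close>] by simp
  qed
qed

lemma mult_power_add_less:
  fixes q m t x :: nat
  assumes "t + 1 < q" and "x < q ^ m"
  shows "t * q ^ m + x < q ^ (m + 1) - q ^ m"
proof -
  have "t * q ^ m + x < (t + 1) * q ^ m"
    using assms(2) by simp
  also have "\<dots> \<le> (q - 1) * q ^ m"
    using assms(1) by (intro mult_le_mono1) simp
  also have "\<dots> = q ^ (m + 1) - q ^ m"
    by (simp add: diff_mult_distrib)
  finally show ?thesis .
qed

lemma arrA_Some_less:
  assumes "j < q ^ m" and "k < q * (m + 1)" and "arrA q m j k = Some s"
  shows "s < q ^ (m + 1) - q ^ m"
proof -
  define u v where "u = k div q" and "v = k mod q"
  have "0 < q"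
    using assms(2) by (cases q) auto
  then have "v < q" and k: "k = u * q + v"
    by (simp_all add: u_def v_def)
  show ?thesis
  proof (cases "u < m")
    case True
    with assms k arrA_column[OF \<open>v < q\<close> \<open>j < q ^ m\<close>, of u]
    have "digit q j u \<noteq> v"
      and s: "s = modq q (int (digit q j u) - int v - 1) * q ^ m + set_digit q m j u v"
      by (auto split: if_splits)
    then have "modq q (int (digit q j u) - int v - 1) + 1 < q"
      using \<open>0 < q\<close> \<open>v < q\<close> by (intro modq_diff_Suc_less) (simp_all add: digit_less)
    then show ?thesis
      unfolding s using \<open>0 < q\<close> \<open>v < q\<close> by (intro mult_power_add_less set_digit_less)
  next
    case False
    with assms k arrA_column[OF \<open>v < q\<close> \<open>j < q ^ m\<close>, of u]
    have "v \<noteq> digit_sum q m j mod q"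
      and s: "s = modq q (int v - int (digit_sum q m j) - 1) * q ^ m + j"
      by (auto split: if_splits)
    then have "modq q (int v - int (digit_sum q m j) - 1) + 1 < q"
      using \<open>v < q\<close> by (intro modq_diff_Suc_less)
    then show ?thesis
      unfolding s using \<open>j < q ^ m\<close> by (rule mult_power_add_less)
  qed
qed

section \<open>The occurrences of a value\<close>

text \<open>
  Only the digits of \<open>x = s mod q^m\<close> enter \<open>digit q s u\<close> (for \<open>u < m\<close>) and \<open>digit_sum q m s\<close>,
  so these are the row and column of the \<open>u\<close>-th occurrence described at the top.
\<close>

definition occ_row :: "nat \<Rightarrow> nat \<Rightarrow> nat \<Rightarrow> nat \<Rightarrow> nat" where
  "occ_row q m s u =
     (if u < m then set_digit q m s u ((digit q s u + s div q ^ m + 1) mod q) else s mod q ^ m)"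

definition occ_col :: "nat \<Rightarrow> nat \<Rightarrow> nat \<Rightarrow> nat \<Rightarrow> nat" where
  "occ_col q m s u =
     u * q + (if u < m then digit q s u else (digit_sum q m s + s div q ^ m + 1) mod q)"

context
  fixes q m s :: nat
  assumes value_less: "s < q ^ (m + 1) - q ^ m"
begin

lemma base_pos: "0 < q"
  using value_less by (cases q) auto

lemma value_div_Suc_less: "s div q ^ m + 1 < q"
proof -
  have "s < (q - 1) * q ^ m"
    using value_less by (simp add: diff_mult_distrib)
  then have "s div q ^ m < q - 1"
    using base_pos by (simp add: div_less_iff_less_mult)
  then show ?thesis by simp
qed

lemma occ_row_less: "occ_row q m s u < q ^ m"
  unfolding occ_row_def using base_pos by (simp add: set_digit_less)

lemma occ_col_div: "occ_col q m s u div q = u"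
  unfolding occ_col_def using base_pos by (simp add: digit_less)

lemma occ_col_less: "u \<le> m \<Longrightarrow> occ_col q m s u < q * (m + 1)"
proof -
  assume "u \<le> m"
  have "occ_col q m s u < u * q + q"
    unfolding occ_col_def using base_pos by (simp add: digit_less)
  also have "\<dots> \<le> q * (m + 1)"
    using \<open>u \<le> m\<close> by (simp add: mult.commute)
  finally show ?thesis .
qed

lemma arrA_occ_less:
  assumes "u < m"
  shows "arrA q m (occ_row q m s u) (occ_col q m s u) = Some s"
proof -
  define t a w where "t = s div q ^ m" and "a = digit q s u" and "w = (a + t + 1) mod q"
  have "0 < q" and "t + 1 < q"
    using base_pos value_div_Suc_less by (simp_all add: t_def)
  then have "a < q" and "w < q"
    by (simp_all add: a_def w_def digit_less)
  have row: "occ_row q m s u = set_digit q m s u w" and col: "occ_col q m s u = u * q + a"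
    using \<open>u < m\<close> by (simp_all add: occ_row_def occ_col_def a_def w_def t_def)
  have "digit q (set_digit q m s u w) u = w"
    using \<open>0 < q\<close> \<open>w < q\<close> \<open>u < m\<close> by (simp add: digit_set_digit)
  moreover have "w \<noteq> a"
    using add_mod_neq[of "t + 1" q a] \<open>t + 1 < q\<close> \<open>a < q\<close> by (simp add: w_def add.assoc)
  moreover have "modq q (int w - int a - 1) = t"
    using modq_diff_add_mod[of t q "a + 1"] \<open>t + 1 < q\<close> by (simp add: w_def algebra_simps)
  moreover have "set_digit q m (set_digit q m s u w) u a = s mod q ^ m"
  proof -
    have "set_digit q m (set_digit q m s u w) u a = set_digit q m s u a"
      using \<open>0 < q\<close> \<open>w < q\<close> by (intro set_digit_cong) (simp add: digit_set_digit)
    then show ?thesis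
      using set_digit_digit[OF \<open>0 < q\<close>] by (simp add: a_def)
  qed
  moreover have "s = t * q ^ m + s mod q ^ m"
    unfolding t_def by (rule div_mult_mod_eq[symmetric])
  ultimately show ?thesis
    unfolding row col using arrA_column[OF \<open>a < q\<close> set_digit_less[OF \<open>0 < q\<close> \<open>w < q\<close>]] \<open>u < m\<close>
    by simp
qed

lemma arrA_occ_last: "arrA q m (occ_row q m s m) (occ_col q m s m) = Some s"
proof -
  define t S w where "t = s div q ^ m" and "S = digit_sum q m s" and "w = (S + t + 1) mod q"
  have "0 < q" and "t + 1 < q"
    using base_pos value_div_Suc_less by (simp_all add: t_def)
  then have "w < q"
    by (simp add: w_def)
  have row: "occ_row q m s m = s mod q ^ m" and col: "occ_col q m s m = m * q + w"
    by (simp_all add: occ_row_def occ_col_def S_def w_def t_def)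
  have "digit_sum q m (s mod q ^ m) = S"
    using \<open>0 < q\<close> by (simp add: S_def digit_sum_mod_power)
  moreover have "S mod q \<noteq> w"
    using add_mod_neq[of "t + 1" q S] \<open>t + 1 < q\<close> by (simp add: w_def add.assoc)
  moreover have "modq q (int w - int S - 1) = t"
    using modq_diff_add_mod[of t q "S + 1"] \<open>t + 1 < q\<close> by (simp add: w_def algebra_simps)
  moreover have "s mod q ^ m < q ^ m"
    using \<open>0 < q\<close> by simp
  moreover have "s = t * q ^ m + s mod q ^ m"
    unfolding t_def by (rule div_mult_mod_eq[symmetric])
  ultimately show ?thesis
    unfolding row col using arrA_column[OF \<open>w < q\<close>, of "s mod q ^ m" m m] by simp
qed

lemma arrA_occ: "u \<le> m \<Longrightarrow> arrA q m (occ_row q m s u) (occ_col q m s u) = Some s"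
  using arrA_occ_less arrA_occ_last by (cases "u < m") auto

lemma arrA_occ_cross:
  assumes "u \<le> m" and "u' \<le> m" and "u \<noteq> u'"
  shows "arrA q m (occ_row q m s u) (occ_col q m s u') = None"
proof (cases "u' < m")
  case True
  have "digit q (occ_row q m s u) u' = digit q s u'"
    using base_pos True \<open>u \<noteq> u'\<close>
    by (simp add: occ_row_def digit_set_digit digit_mod_power digit_less)
  then show ?thesis
    using arrA_column[of "digit q s u'" q "occ_row q m s u" m u'] base_pos occ_row_less True
    by (simp add: occ_col_def digit_less)
next
  case False
  define t S a w where "t = s div q ^ m" and "S = digit_sum q m s" and "a = digit q s u"
    and "w = (a + t + 1) mod q"
  have "u' = m" and "u < m"
    using False assms by simp_all
  have "0 < q" and "w < q"
    using base_pos by (simp_all add: w_def)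
  have row: "occ_row q m s u = set_digit q m s u w"
    using \<open>u < m\<close> by (simp add: occ_row_def t_def a_def w_def)
  have "digit_sum q m (set_digit q m s u w) + a = S + w"
    unfolding S_def a_def using \<open>0 < q\<close> \<open>u < m\<close> \<open>w < q\<close> by (rule digit_sum_set_digit)
  then have "[digit_sum q m (set_digit q m s u w) + a = S + t + 1 + a] (mod q)"
    by (simp add: w_def cong_def mod_add_right_eq ac_simps)
  then have "[digit_sum q m (set_digit q m s u w) = S + t + 1] (mod q)"
    by (rule cong_add_rcancel_nat[THEN iffD1])
  then have "digit_sum q m (set_digit q m s u w) mod q = (S + t + 1) mod q"
    unfolding cong_def .
  then show ?thesis
    using arrA_column[of "(S + t + 1) mod q" q "occ_row q m s u" m u'] \<open>0 < q\<close> occ_row_less[of u] \<open>u' = m\<close>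
    by (simp add: row occ_col_def S_def t_def)
qed

lemma arrA_Some_imp_occ_less:
  assumes "j < q ^ m" and "v < q" and "u < m" and "arrA q m j (u * q + v) = Some s"
  shows "j = occ_row q m s u \<and> u * q + v = occ_col q m s u"
proof -
  define a e T where "a = digit q j u" and "e = set_digit q m j u v"
    and "T = modq q (int a - int v - 1)"
  with assms arrA_column[OF \<open>v < q\<close> \<open>j < q ^ m\<close>, of u]
  have s: "s = T * q ^ m + e"
    by (auto split: if_splits)
  have "0 < q"
    by (rule base_pos)
  then have "a < q" and "e < q ^ m"
    using \<open>v < q\<close> by (simp_all add: a_def e_def digit_less set_digit_less)
  then have "s div q ^ m = T" and "s mod q ^ m = e"
    by (simp_all add: s)
  have digit_s: "digit q s l = (if l = u then v else digit q j l)" if "l < m" for l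
    using digit_mod_power[OF \<open>0 < q\<close> that, of s] digit_set_digit[OF \<open>0 < q\<close> \<open>v < q\<close> that]
    by (simp add: \<open>s mod q ^ m = e\<close> e_def)
  have "(v + T + 1) mod q = a"
    using mod_add_modq_diff[OF \<open>a < q\<close>, of "v + 1"] by (simp add: T_def algebra_simps)
  then have "occ_row q m s u = set_digit q m j u a"
    using \<open>u < m\<close> \<open>s div q ^ m = T\<close> digit_s
    by (simp add: occ_row_def) (rule set_digit_cong, simp)
  also have "\<dots> = j"
    using set_digit_digit[OF \<open>0 < q\<close>] \<open>j < q ^ m\<close> by (simp add: a_def)
  finally show ?thesis
    using \<open>u < m\<close> digit_s by (simp add: occ_col_def)
qed

lemma arrA_Some_imp_occ_last:
  assumes "j < q ^ m" and "v < q" and "arrA q m j (m * q + v) = Some s"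
  shows "j = occ_row q m s m \<and> m * q + v = occ_col q m s m"
proof -
  define S T where "S = digit_sum q m j" and "T = modq q (int v - int S - 1)"
  with assms arrA_column[OF \<open>v < q\<close> \<open>j < q ^ m\<close>, of m]
  have s: "s = T * q ^ m + j"
    by (auto split: if_splits)
  have "0 < q"
    by (rule base_pos)
  with s have "s div q ^ m = T" and "s mod q ^ m = j"
    using \<open>j < q ^ m\<close> by simp_all
  moreover have "digit_sum q m s = S"
    using digit_sum_mod_power[OF \<open>0 < q\<close>, of m s] \<open>s mod q ^ m = j\<close> by (simp add: S_def)
  moreover have "(S + T + 1) mod q = v"
    using mod_add_modq_diff[OF \<open>v < q\<close>, of "S + 1"] by (simp add: T_def algebra_simps)
  ultimately show ?thesis
    by (simp add: occ_row_def occ_col_def)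
qed

lemma arrA_Some_imp_occ:
  assumes "j < q ^ m" and "k < q * (m + 1)" and "arrA q m j k = Some s"
  shows "j = occ_row q m s (k div q) \<and> k = occ_col q m s (k div q)"
proof -
  define u v where "u = k div q" and "v = k mod q"
  have "v < q" and k: "k = u * q + v"
    using base_pos by (simp_all add: u_def v_def)
  have "u \<le> m"
    using assms(2) by (simp add: u_def div_le_if_less_mult)
  then have "j = occ_row q m s u \<and> k = occ_col q m s u"
    using arrA_Some_imp_occ_less[OF assms(1) \<open>v < q\<close>] arrA_Some_imp_occ_last[OF assms(1) \<open>v < q\<close>]
      assms(3) k by (cases "u < m") auto
  then show ?thesis
    by (simp only: u_def)
qed

lemma arrA_value_cells:
  "{(j, k). j < q ^ m \<and> k < q * (m + 1) \<and> arrA q m j k = Some s}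
     = (\<lambda>u. (occ_row q m s u, occ_col q m s u)) ` {..m}"
proof (intro equalityI subsetI)
  fix c assume "c \<in> {(j, k). j < q ^ m \<and> k < q * (m + 1) \<and> arrA q m j k = Some s}"
  then obtain j k where c: "c = (j, k)" and "j < q ^ m" "k < q * (m + 1)" "arrA q m j k = Some s"
    by blast
  then have "c = (occ_row q m s (k div q), occ_col q m s (k div q))"
    using arrA_Some_imp_occ by simp
  moreover have "k div q \<le> m"
    using \<open>k < q * (m + 1)\<close> by (rule div_le_if_less_mult)
  ultimately show "c \<in> (\<lambda>u. (occ_row q m s u, occ_col q m s u)) ` {..m}"
    by blast
next
  fix c assume "c \<in> (\<lambda>u. (occ_row q m s u, occ_col q m s u)) ` {..m}"
  then obtain u where "u \<le> m" and c: "c = (occ_row q m s u, occ_col q m s u)"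
    by blast
  then show "c \<in> {(j, k). j < q ^ m \<and> k < q * (m + 1) \<and> arrA q m j k = Some s}"
    using occ_row_less occ_col_less[OF \<open>u \<le> m\<close>] arrA_occ[OF \<open>u \<le> m\<close>] by simp
qed

lemma card_arrA_value_cells:
  "card {(j, k). j < q ^ m \<and> k < q * (m + 1) \<and> arrA q m j k = Some s} = m + 1"
proof -
  have "inj_on (\<lambda>u. (occ_row q m s u, occ_col q m s u)) {..m}"
    by (rule inj_onI) (metis occ_col_div prod.inject)
  then show ?thesis
    unfolding arrA_value_cells by (simp add: card_image)
qed

end

lemma arrA_same_value:
  assumes "j1 < q ^ m" and "k1 < q * (m + 1)" and "arrA q m j1 k1 = Some s"
    and "j2 < q ^ m" and "k2 < q * (m + 1)" and "arrA q m j2 k2 = Some s"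
    and "(j1, k1) \<noteq> (j2, k2)"
  shows "j1 \<noteq> j2 \<and> k1 \<noteq> k2 \<and> arrA q m j1 k2 = None \<and> arrA q m j2 k1 = None"
proof -
  have "s < q ^ (m + 1) - q ^ m"
    using assms(1-3) by (rule arrA_Some_less)
  define u1 u2 where "u1 = k1 div q" and "u2 = k2 div q"
  have "u1 \<le> m" and "u2 \<le> m"
    using assms(2,5) by (simp_all add: u1_def u2_def div_le_if_less_mult)
  have 1: "j1 = occ_row q m s u1" "k1 = occ_col q m s u1"
    using arrA_Some_imp_occ[OF \<open>s < q ^ (m + 1) - q ^ m\<close> assms(1-3)] by (simp_all add: u1_def)
  have 2: "j2 = occ_row q m s u2" "k2 = occ_col q m s u2"
    using arrA_Some_imp_occ[OF \<open>s < q ^ (m + 1) - q ^ m\<close> assms(4-6)] by (simp_all add: u2_def)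
  have "u1 \<noteq> u2"
    using 1 2 assms(7) by auto
  then have "arrA q m j1 k2 = None" and "arrA q m j2 k1 = None" and "k1 \<noteq> k2"
    using 1 2 \<open>u1 \<le> m\<close> \<open>u2 \<le> m\<close> arrA_occ_cross[OF \<open>s < q ^ (m + 1) - q ^ m\<close>]
      occ_col_div[OF \<open>s < q ^ (m + 1) - q ^ m\<close>] by metis+
  moreover have "j1 \<noteq> j2"
    using \<open>arrA q m j1 k2 = None\<close> assms(6) by auto
  ultimately show ?thesis
    by blast
qed

theorem theorem4:
  fixes q m :: nat
  assumes "q \<ge> 2" and "m \<ge> 1"
  shows "is_regular_PDA (m + 1) (q * (m + 1)) (q ^ m) (q ^ (m - 1)) (q ^ (m + 1) - q ^ m) (arrA q m)
         \<and> PDA_rate (q ^ m) (q ^ (m + 1) - q ^ m) = real q - 1"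
proof
  have "q ^ m < q ^ (m + 1)"
    using assms(1) by simp
  then have "0 < q * (m + 1) \<and> 0 < q ^ m \<and> 0 < q ^ (m - 1) \<and> 0 < q ^ (m + 1) - q ^ m"
    using assms(1) by simp
  moreover have "\<forall>j<q ^ m. \<forall>k<q * (m + 1). \<forall>s. arrA q m j k = Some s \<longrightarrow> s < q ^ (m + 1) - q ^ m"
    using arrA_Some_less by blast
  moreover have "\<forall>k<q * (m + 1). card {j. j < q ^ m \<and> arrA q m j k = None} = q ^ (m - 1)"
    using card_arrA_column_stars assms(2) by simp
  moreover have "\<forall>s<q ^ (m + 1) - q ^ m.
      card {(j, k). j < q ^ m \<and> k < q * (m + 1) \<and> arrA q m j k = Some s} = m + 1"
    using card_arrA_value_cells by blast
  moreover have "\<forall>j1<q ^ m. \<forall>k1<q * (m + 1). \<forall>j2<q ^ m. \<forall>k2<q * (m + 1). \<forall>s.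
      arrA q m j1 k1 = Some s \<and> arrA q m j2 k2 = Some s \<and> (j1, k1) \<noteq> (j2, k2) \<longrightarrow>
      j1 \<noteq> j2 \<and> k1 \<noteq> k2 \<and> arrA q m j1 k2 = None \<and> arrA q m j2 k1 = None"
    using arrA_same_value by blast
  ultimately show "is_regular_PDA (m + 1) (q * (m + 1)) (q ^ m) (q ^ (m - 1)) (q ^ (m + 1) - q ^ m) (arrA q m)"
    unfolding is_regular_PDA_def by blast
  have "real (q ^ (m + 1) - q ^ m) = (real q - 1) * real q ^ m"
    using \<open>q ^ m < q ^ (m + 1)\<close> by (simp add: of_nat_diff algebra_simps)
  then show "PDA_rate (q ^ m) (q ^ (m + 1) - q ^ m) = real q - 1"
    using assms(1) by (simp add: PDA_rate_def)
qed

end
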